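(* Fix $M$, integers $L,l$, and a job set $J$ with $L\ge D(J)$, and let $h$ be a hash function that is $(L,l)$-good for $J$. Then, for any starting positions of the jobs and any choices of which eligible job to work on, the algorithm StatelessWeakScheduler run on $J$ with parameters $L,l,h$ completes at least half of the jobs within $2Ll$ time steps.
   Context: Job-shop scheduling with unit jobs: machines $M$; jobs $J$ with sequences $\mathrm{seq}(j)\in M^*$, unique identifiers $\mathrm{ind}(j)\in I=\{1,\dots,|M|^c\}$ and positions $\mathrm{pos}(j)_t\in\{0,\dots,\mathrm{len}(\mathrm{seq}(j))\}$ (completed at the last value; here initial positions are arbitrary); $\mathrm{que}(m)_t=\{j:\mathrm{seq}(j)_{\mathrm{pos}(j)_t}=m\}$; each step each machine works on at most one job in its queue, which advances one position. $D(J)=\max_j\mathrm{len}(\mathrm{seq}(j))$. For $h:M^*\times I\to\{0,\dots,L-1\}$ with $h(j):=h(\mathrm{seq}(j),\mathrm{ind}(j))$: $\mathrm{virt}(j,i)=h(j)+i$ for $i<\mathrm{len}(\mathrm{seq}(j))$ and $\infty$ otherwise; $\mathrm{virt}(j)_t=\mathrm{virt}(j,\mathrm{pos}(j)_t)$. StatelessWeakScheduler$(m,L,l,h,t)$ at time $t$ (counted from the subroutine's start): $T=\lfloor t/l\rfloor$, $Q=\{j\in\mathrm{que}(m)_t:\mathrm{virt}(j)_t=T\}$; if $0<|Q|\le l$ machine $m$ works on an arbitrary $j\in Q$, else does nothing. Bad pattern (for fixed $M,L,l,J$): sets $B_{T,m}$, $0\le T<2L$, $m\in M$, of (job, position) pairs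 with $\mathrm{seq}(j)_i=m$ for $(j,i)\in B_{T,m}$; each $j\in J$ appears at most once in $\bigsqcup B_{T,m}$; $|B_{T,m}|\in\{0\}\cup(l,|J|]$; $\sum|B_{T,m}|>|J|/2$. It occurs for $h$ if $\mathrm{virt}(j,i)=T$ for all $(j,i)\in B_{T,m}$ and all $(T,m)$. $h$ is $(L,l)$-good for $J$ if no bad pattern occurs for $h$. *)

theory Defs
  imports Main "HOL-Library.Extended_Nat"
begin

text \<open>Jobs are elements of an abstract type 'j, with sequence seq j (a list of machines,
  indexed from 0) and identifier ind j.  A hash function h maps (sequence, identifier) to
  a number; h(j) := h (seq j) (ind j).\<close>

definition D :: "'j set \<Rightarrow> ('j \<Rightarrow> 'm list) \<Rightarrow> nat" where
  "D J seq = Max (insert 0 ((\<lambda>j. length (seq j)) ` J))"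

definition virt :: "('j \<Rightarrow> 'm list) \<Rightarrow> ('j \<Rightarrow> nat) \<Rightarrow> ('m list \<Rightarrow> nat \<Rightarrow> nat)
    \<Rightarrow> 'j \<Rightarrow> nat \<Rightarrow> enat" where
  "virt seq ind h j i = (if i < length (seq j) then enat (h (seq j) (ind j) + i) else \<infinity>)"

text \<open>que(m) for a position assignment p (a completed job, p j = length (seq j), is in no queue).\<close>
definition que :: "'j set \<Rightarrow> ('j \<Rightarrow> 'm list) \<Rightarrow> ('j \<Rightarrow> nat) \<Rightarrow> 'm \<Rightarrow> 'j set" where
  "que J seq p m = {j \<in> J. p j < length (seq j) \<and> seq j ! p j = m}"

definition swsQ :: "'j set \<Rightarrow> ('j \<Rightarrow> 'm list) \<Rightarrow> ('j \<Rightarrow> nat) \<Rightarrow> ('m list \<Rightarrow> nat \<Rightarrow> nat)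
    \<Rightarrow> nat \<Rightarrow> ('j \<Rightarrow> nat) \<Rightarrow> nat \<Rightarrow> 'm \<Rightarrow> 'j set" where
  "swsQ J seq ind h l p t m = {j \<in> que J seq p m. virt seq ind h j (p j) = enat (t div l)}"

text \<open>A run of StatelessWeakScheduler: pos t j is the position of job j at time t,
  sel t m is the (arbitrary) job that machine m chooses at time t from Q (relevant only
  when 0 < |Q| \<le> l).\<close>
definition sws_run :: "'m set \<Rightarrow> 'j set \<Rightarrow> ('j \<Rightarrow> 'm list) \<Rightarrow> ('j \<Rightarrow> nat)
    \<Rightarrow> ('m list \<Rightarrow> nat \<Rightarrow> nat) \<Rightarrow> nat \<Rightarrow> (nat \<Rightarrow> 'j \<Rightarrow> nat) \<Rightarrow> (nat \<Rightarrow> 'm \<Rightarrow> 'j) \<Rightarrow> bool" where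
  "sws_run M J seq ind h l pos sel \<longleftrightarrow>
     (\<forall>j\<in>J. pos 0 j \<le> length (seq j)) \<and>
     (\<forall>t. \<forall>m\<in>M. 0 < card (swsQ J seq ind h l (pos t) t m) \<and> card (swsQ J seq ind h l (pos t) t m) \<le> l
         \<longrightarrow> sel t m \<in> swsQ J seq ind h l (pos t) t m) \<and>
     (\<forall>t. \<forall>j\<in>J. pos (Suc t) j =
         (if pos t j < length (seq j) \<and>
             0 < card (swsQ J seq ind h l (pos t) t (seq j ! pos t j)) \<and>
             card (swsQ J seq ind h l (pos t) t (seq j ! pos t j)) \<le> l \<and>
             sel t (seq j ! pos t j) = j
          then Suc (pos t j) else pos t j))"

definition bad_pattern :: "'m set \<Rightarrow> nat \<Rightarrow> nat \<Rightarrow> 'j set \<Rightarrow> ('j \<Rightarrow> 'm list)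
    \<Rightarrow> (nat \<Rightarrow> 'm \<Rightarrow> ('j \<times> nat) set) \<Rightarrow> bool" where
  "bad_pattern M L l J seq B \<longleftrightarrow>
     (\<forall>T<2*L. \<forall>m\<in>M. \<forall>(j,i)\<in>B T m. j \<in> J \<and> i < length (seq j) \<and> seq j ! i = m) \<and>
     (\<forall>T<2*L. \<forall>m\<in>M. \<forall>T'<2*L. \<forall>m'\<in>M. \<forall>j i i'.
         (j,i) \<in> B T m \<longrightarrow> (j,i') \<in> B T' m' \<longrightarrow> T = T' \<and> m = m' \<and> i = i') \<and>
     (\<forall>T<2*L. \<forall>m\<in>M. card (B T m) = 0 \<or> (l < card (B T m) \<and> card (B T m) \<le> card J)) \<and>
     2 * (\<Sum>T<2*L. \<Sum>m\<in>M. card (B T m)) > card J"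

definition pattern_occurs :: "'m set \<Rightarrow> nat \<Rightarrow> ('j \<Rightarrow> 'm list) \<Rightarrow> ('j \<Rightarrow> nat)
    \<Rightarrow> ('m list \<Rightarrow> nat \<Rightarrow> nat) \<Rightarrow> (nat \<Rightarrow> 'm \<Rightarrow> ('j \<times> nat) set) \<Rightarrow> bool" where
  "pattern_occurs M L seq ind h B \<longleftrightarrow>
     (\<forall>T<2*L. \<forall>m\<in>M. \<forall>(j,i)\<in>B T m. virt seq ind h j i = enat T)"

definition good_hash :: "'m set \<Rightarrow> nat \<Rightarrow> nat \<Rightarrow> 'j set \<Rightarrow> ('j \<Rightarrow> 'm list) \<Rightarrow> ('j \<Rightarrow> nat)
    \<Rightarrow> ('m list \<Rightarrow> nat \<Rightarrow> nat) \<Rightarrow> bool" where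
  "good_hash M L l J seq ind h \<longleftrightarrow>
     \<not> (\<exists>B. bad_pattern M L l J seq B \<and> pattern_occurs M L seq ind h B)"

end

theory Submission
  imports Defs
begin

text \<open>Suppose fewer than half of the jobs are complete at time \<open>N = 2Ll\<close>. Group the incomplete
  jobs by their current virtual time \<open>T < 2L\<close> and current machine \<open>m\<close>. Each nonempty group
  has more than \<open>l\<close> members: a job \<open>j\<close> that is stuck with virtual time \<open>T\<close> at time \<open>N\<close> was
  already waiting on \<open>m\<close> during the whole window \<open>[Tl, (T+1)l)\<close>. Had that queue held at most \<open>l\<close>
  jobs at the start of the window, the machine would have served a different job of it in each
  step, so \<open>j\<close> would have been served by the end of the window. Hence the queue was overloaded,
  none of its jobs ever moved again, and all of them are in the group of \<open>j\<close>. The groups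
  therefore form a bad pattern occurring for \<open>h\<close>, contradicting goodness.\<close>

definition virt_queue :: "'j set \<Rightarrow> ('j \<Rightarrow> 'm list) \<Rightarrow> ('j \<Rightarrow> nat) \<Rightarrow> ('m list \<Rightarrow> nat \<Rightarrow> nat)
    \<Rightarrow> ('j \<Rightarrow> nat) \<Rightarrow> nat \<Rightarrow> 'm \<Rightarrow> 'j set" where
  "virt_queue J seq ind h p T m = {j \<in> que J seq p m. virt seq ind h j (p j) = enat T}"

lemma mem_virt_queue_iff:
  "j \<in> virt_queue J seq ind h p T m \<longleftrightarrow>
     j \<in> J \<and> p j < length (seq j) \<and> seq j ! p j = m \<and> h (seq j) (ind j) + p j = T"
  by (auto simp: virt_queue_def que_def virt_def)

lemma swsQ_eq_virt_queue: "swsQ J seq ind h l p t m = virt_queue J seq ind h p (t div l) m"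
  by (simp add: swsQ_def virt_queue_def)

lemma finite_virt_queue: "finite J \<Longrightarrow> finite (virt_queue J seq ind h p T m)"
  by (simp add: virt_queue_def que_def)

lemma length_le_D: "finite J \<Longrightarrow> j \<in> J \<Longrightarrow> length (seq j) \<le> D J seq"
  unfolding D_def by (intro Max_ge) auto

lemma sum_card_virt_queue:
  assumes "finite M" "finite J" "\<forall>j\<in>J. set (seq j) \<subseteq> M"
    and "\<forall>j\<in>J. p j < length (seq j) \<longrightarrow> h (seq j) (ind j) + p j < K"
  shows "(\<Sum>T<K. \<Sum>m\<in>M. card (virt_queue J seq ind h p T m)) = card {j \<in> J. p j < length (seq j)}"
proof -
  let ?U = "{j \<in> J. p j < length (seq j)}"
  let ?v = "\<lambda>j. (h (seq j) (ind j) + p j, seq j ! p j)"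
  have "?v ` ?U \<subseteq> {..<K} \<times> M"
    using assms(3,4) by (auto intro: nth_mem)
  then have "(\<Sum>y \<in> {..<K} \<times> M. card {j \<in> ?U. ?v j = y}) = card ?U"
    unfolding card_eq_sum using assms(1,2) by (intro sum.group) auto
  moreover have "{j \<in> ?U. ?v j = y} = virt_queue J seq ind h p (fst y) (snd y)" for y
    by (auto simp: mem_virt_queue_iff)
  ultimately show ?thesis
    by (simp add: sum.cartesian_product case_prod_beta)
qed

lemma not_good_hash_if_virt_queues_overloaded:
  fixes p :: "'j \<Rightarrow> nat"
  assumes "finite M" "finite J" "\<forall>j\<in>J. set (seq j) \<subseteq> M"
    and "\<forall>j\<in>J. p j < length (seq j) \<longrightarrow> h (seq j) (ind j) + p j < 2 * L"
    and "\<forall>j\<in>J. p j \<le> length (seq j)"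
    and queues_overloaded: "\<forall>T<2*L. \<forall>m\<in>M. virt_queue J seq ind h p T m \<noteq> {}
                        \<longrightarrow> l < card (virt_queue J seq ind h p T m)"
    and few_complete: "2 * card {j \<in> J. p j = length (seq j)} < card J"
  shows "\<not> good_hash M L l J seq ind h"
proof -
  define B where "B T m = (\<lambda>j. (j, p j)) ` virt_queue J seq ind h p T m" for T m
  have card_B: "card (B T m) = card (virt_queue J seq ind h p T m)" for T m
    unfolding B_def by (rule card_image) (auto simp: inj_on_def)
  have "J = {j \<in> J. p j = length (seq j)} \<union> {j \<in> J. p j < length (seq j)}"
    using assms(5) by (auto simp: le_less)
  also have "card \<dots> = card {j \<in> J. p j = length (seq j)} + card {j \<in> J. p j < length (seq j)}"
    using assms(2) by (intro card_Un_disjoint) auto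
  finally have "card J = card {j \<in> J. p j = length (seq j)} + card {j \<in> J. p j < length (seq j)}" .
  moreover have "(\<Sum>T<2*L. \<Sum>m\<in>M. card (B T m)) = card {j \<in> J. p j < length (seq j)}"
    unfolding card_B using assms(1-4) by (rule sum_card_virt_queue)
  ultimately have "card J < 2 * (\<Sum>T<2*L. \<Sum>m\<in>M. card (B T m))"
    using few_complete by linarith
  moreover have "card (B T m) \<le> card J" for T m
    unfolding card_B using assms(2) by (intro card_mono) (auto simp: mem_virt_queue_iff)
  moreover have "card (B T m) = 0 \<or> l < card (B T m)" if "T < 2*L" "m \<in> M" for T m
    using queues_overloaded that unfolding card_B by fastforce
  ultimately have "bad_pattern M L l J seq B"
    unfolding bad_pattern_def by (auto simp: B_def mem_virt_queue_iff)
  moreover have "pattern_occurs M L seq ind h B"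
    by (auto simp: pattern_occurs_def B_def mem_virt_queue_iff virt_def)
  ultimately show ?thesis
    unfolding good_hash_def by blast
qed

locale sws_execution =
  fixes M :: "'m set" and J :: "'j set" and seq :: "'j \<Rightarrow> 'm list" and ind :: "'j \<Rightarrow> nat"
    and h :: "'m list \<Rightarrow> nat \<Rightarrow> nat" and l :: nat
    and pos :: "nat \<Rightarrow> 'j \<Rightarrow> nat" and sel :: "nat \<Rightarrow> 'm \<Rightarrow> 'j"
  assumes run: "sws_run M J seq ind h l pos sel"
    and finite_J: "finite J"
    and seq_in_M: "\<forall>j\<in>J. set (seq j) \<subseteq> M"
begin

abbreviation Q :: "nat \<Rightarrow> 'm \<Rightarrow> 'j set" where
  "Q t m \<equiv> swsQ J seq ind h l (pos t) t m"

abbreviation works :: "nat \<Rightarrow> 'm \<Rightarrow> bool" where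
  "works t m \<equiv> 0 < card (Q t m) \<and> card (Q t m) \<le> l"

lemma mem_Q_iff:
  "j \<in> Q t m \<longleftrightarrow>
     j \<in> J \<and> pos t j < length (seq j) \<and> seq j ! pos t j = m \<and> h (seq j) (ind j) + pos t j = t div l"
  by (simp add: swsQ_eq_virt_queue mem_virt_queue_iff)

lemma finite_Q [simp]: "finite (Q t m)"
  by (simp add: swsQ_eq_virt_queue finite_virt_queue finite_J)

lemma machine_in_M_if_mem_Q: "j \<in> Q t m \<Longrightarrow> m \<in> M"
  using seq_in_M nth_mem by (fastforce simp: mem_Q_iff)

lemma pos_Suc:
  "j \<in> J \<Longrightarrow> pos (Suc t) j =
     (if pos t j < length (seq j) \<and> works t (seq j ! pos t j) \<and> sel t (seq j ! pos t j) = j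
      then Suc (pos t j) else pos t j)"
  using run unfolding sws_run_def conj_assoc by blast

lemma sel_in_Q: "m \<in> M \<Longrightarrow> works t m \<Longrightarrow> sel t m \<in> Q t m"
  using run unfolding sws_run_def by blast

lemma pos_Suc_if_served: "j \<in> Q t m \<Longrightarrow> works t m \<Longrightarrow> sel t m = j \<Longrightarrow> pos (Suc t) j = Suc (pos t j)"
  by (simp add: pos_Suc mem_Q_iff)

lemma pos_Suc_if_overloaded: "j \<in> Q t m \<Longrightarrow> l < card (Q t m) \<Longrightarrow> pos (Suc t) j = pos t j"
  by (simp add: pos_Suc mem_Q_iff)

lemma pos_Suc_neqD:
  assumes "j \<in> J" "pos (Suc t) j \<noteq> pos t j"
  shows "pos (Suc t) j = Suc (pos t j) \<and> j \<in> Q t (seq j ! pos t j)"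
proof -
  let ?m = "seq j ! pos t j"
  have served: "pos t j < length (seq j)" "works t ?m" "sel t ?m = j"
    using pos_Suc[OF assms(1)] assms(2) by (auto split: if_splits)
  then have "?m \<in> M"
    using seq_in_M assms(1) nth_mem by blast
  then show ?thesis
    using served sel_in_Q pos_Suc[OF assms(1)] by fastforce
qed

lemma pos_le_pos_Suc: "j \<in> J \<Longrightarrow> pos t j \<le> pos (Suc t) j"
  using pos_Suc_neqD[of j t] by (cases "pos (Suc t) j = pos t j") auto

lemma pos_mono: "j \<in> J \<Longrightarrow> t \<le> t' \<Longrightarrow> pos t j \<le> pos t' j"
  using lift_Suc_mono_le[of "\<lambda>t. pos t j"] pos_le_pos_Suc by blast

lemma pos_le_length: "j \<in> J \<Longrightarrow> pos t j \<le> length (seq j)"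
proof (induction t)
  case 0
  then show ?case using run unfolding sws_run_def by blast
next
  case (Suc t)
  then show ?case
    using pos_Suc_neqD[OF Suc.prems, of t] by (fastforce simp: mem_Q_iff)
qed

lemma pos_stuck_if_late:
  assumes "j \<in> J" "h (seq j) (ind j) + pos t j < t div l" "t \<le> t'"
  shows "pos t' j = pos t j"
  using assms(3)
proof (induction t' rule: dec_induct)
  case (step n)
  have "t div l \<le> n div l"
    using step.hyps(1) by (rule div_le_mono)
  then have "j \<notin> Q n m" for m
    using assms(2) step.IH by (simp add: mem_Q_iff)
  then show ?case
    using pos_Suc_neqD[OF assms(1), of n] step.IH by metis
qed simp

lemma Q_Suc_subset_Q:
  assumes same_window: "Suc t div l = t div l"
  shows "Q (Suc t) m \<subseteq> Q t m"
proof
  fix j assume "j \<in> Q (Suc t) m"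
  then have j: "j \<in> J" "pos (Suc t) j < length (seq j)" "seq j ! pos (Suc t) j = m"
      "h (seq j) (ind j) + pos (Suc t) j = t div l"
    using same_window by (simp_all add: mem_Q_iff)
  have "pos (Suc t) j = pos t j"
  proof (rule ccontr)
    assume "pos (Suc t) j \<noteq> pos t j"
    with pos_Suc_neqD[OF j(1), of t] j(4) show False
      by (simp add: mem_Q_iff)
  qed
  with j show "j \<in> Q t m"
    by (simp add: mem_Q_iff)
qed

lemma Q_Suc_subset_Q_Diff_sel:
  assumes "Suc t div l = t div l" "m \<in> M" "works t m"
  shows "Q (Suc t) m \<subseteq> Q t m - {sel t m}"
proof -
  have "sel t m \<in> Q t m"
    using sel_in_Q assms(2,3) by blast
  then have "pos (Suc t) (sel t m) = Suc (pos t (sel t m))"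
    using assms(3) pos_Suc_if_served by blast
  then have "sel t m \<notin> Q (Suc t) m"
    using \<open>sel t m \<in> Q t m\<close> assms(1) by (simp add: mem_Q_iff)
  then show ?thesis
    using Q_Suc_subset_Q[OF assms(1)] by blast
qed

lemma card_Q_window_decrease:
  assumes "k < l" "m \<in> M" "card (Q (T * l) m) \<le> l"
  shows "Q (T * l + k) m = {} \<or> card (Q (T * l + k) m) + k \<le> card (Q (T * l) m)"
  using assms(1)
proof (induction k)
  case (Suc k)
  have "(T * l + Suc k) div l = T" "(T * l + k) div l = T"
    using Suc.prems by (simp del: add_Suc_right)+
  then have same_window: "Suc (T * l + k) div l = (T * l + k) div l"
    by simp
  show ?case
  proof (cases "Q (T * l + k) m = {}")
    case True
    then show ?thesis
      using Q_Suc_subset_Q[OF same_window, of m] by auto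
  next
    case False
    then have "card (Q (T * l + k) m) + k \<le> card (Q (T * l) m)"
      using Suc by simp
    then have "works (T * l + k) m"
      using False assms(3) finite_Q by (simp add: card_gt_0_iff)
    then have "card (Q (Suc (T * l + k)) m) \<le> card (Q (T * l + k) m - {sel (T * l + k) m})"
      using Q_Suc_subset_Q_Diff_sel[OF same_window assms(2)] by (intro card_mono) simp_all
    also have "\<dots> = card (Q (T * l + k) m) - 1"
      using sel_in_Q[OF assms(2) \<open>works (T * l + k) m\<close>] by simp
    finally show ?thesis
      using \<open>card (Q (T * l + k) m) + k \<le> _\<close> \<open>works (T * l + k) m\<close> by auto
  qed
qed simp

lemma overloaded_if_unserved:
  assumes "0 < l" "j \<in> Q (T * l) m" "pos (T * l + l) j = pos (T * l) j"
  shows "l < card (Q (T * l) m)"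
proof (rule ccontr)
  assume "\<not> l < card (Q (T * l) m)"
  define k where "k = l - 1"
  have k: "k < l" "Suc (T * l + k) = T * l + l"
    using assms(1) by (simp_all add: k_def)
  have jJ: "j \<in> J" and m: "m \<in> M"
    using assms(2) machine_in_M_if_mem_Q by (auto simp: mem_Q_iff)
  have "pos (T * l) j \<le> pos (T * l + k) j" "pos (T * l + k) j \<le> pos (T * l + l) j"
    using k(1) by (simp_all add: pos_mono[OF jJ])
  then have unmoved: "pos (T * l + k) j = pos (T * l) j"
    using assms(3) by simp
  then have jQ: "j \<in> Q (T * l + k) m"
    using assms(2) k(1) by (simp add: mem_Q_iff)
  then have "card (Q (T * l + k) m) \<le> 1"
    using card_Q_window_decrease[OF k(1) m, where T = T] \<open>\<not> l < _\<close> k_def by fastforce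
  then have "Q (T * l + k) m = {j}"
    using jQ by (auto simp: card_le_Suc0_iff_eq)
  moreover have "works (T * l + k) m"
    using \<open>Q (T * l + k) m = {j}\<close> assms(1) by simp
  ultimately have "pos (Suc (T * l + k)) j = Suc (pos (T * l + k) j)"
    using sel_in_Q[OF m] pos_Suc_if_served jQ by blast
  then show False
    using k(2) unmoved assms(3) by simp
qed

lemma pos_frozen_if_overloaded:
  assumes "l < card (Q (T * l) m)" "k \<le> l" "j \<in> Q (T * l) m"
  shows "pos (T * l + k) j = pos (T * l) j"
proof -
  have "\<forall>j \<in> Q (T * l) m. pos (T * l + k) j = pos (T * l) j"
    using assms(2)
  proof (induction k)
    case (Suc k)
    then have unmoved: "\<forall>j \<in> Q (T * l) m. pos (T * l + k) j = pos (T * l) j"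
      by simp
    then have "Q (T * l) m \<subseteq> Q (T * l + k) m"
      using Suc.prems by (auto simp: mem_Q_iff)
    then have "l < card (Q (T * l + k) m)"
      using assms(1) card_mono[OF finite_Q] by (meson order_less_le_trans)
    then show ?case
      using unmoved pos_Suc_if_overloaded \<open>Q (T * l) m \<subseteq> _\<close> by auto
  qed simp
  then show ?thesis
    using assms(3) by blast
qed

lemma pos_stuck_if_overloaded:
  assumes "0 < l" "l < card (Q (T * l) m)" "j \<in> Q (T * l) m" "T * l \<le> t"
  shows "pos t j = pos (T * l) j"
proof (cases "t \<le> T * l + l")
  case True
  then show ?thesis
    using pos_frozen_if_overloaded[OF assms(2) _ assms(3), of "t - T * l"] assms(4) by simp
next
  case False
  have frozen: "pos (T * l + l) j = pos (T * l) j"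
    using pos_frozen_if_overloaded[OF assms(2) order_refl assms(3)] .
  moreover have "h (seq j) (ind j) + pos (T * l + l) j < (T * l + l) div l"
    using assms(1,3) frozen by (simp add: mem_Q_iff)
  ultimately show ?thesis
    using pos_stuck_if_late[of j "T * l + l" t] assms(3) False by (simp add: mem_Q_iff)
qed

lemma pos_at_window_start:
  assumes "j \<in> J" "0 < l" "h (seq j) (ind j) + pos N j = T" "T * l \<le> N"
  shows "pos (T * l) j = pos N j"
proof (rule ccontr)
  assume "pos (T * l) j \<noteq> pos N j"
  then have "pos (T * l) j < pos N j"
    using pos_mono[OF assms(1,4)] by simp
  then have "h (seq j) (ind j) + pos (T * l) j < T * l div l"
    using assms(2,3) by simp
  then have "pos N j = pos (T * l) j"
    using pos_stuck_if_late[OF assms(1) _ assms(4)] by blast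
  with \<open>pos (T * l) j \<noteq> pos N j\<close> show False
    by simp
qed

lemma virt_queue_overloaded:
  assumes "Suc T * l \<le> N" "virt_queue J seq ind h (pos N) T m \<noteq> {}"
  shows "l < card (virt_queue J seq ind h (pos N) T m)"
proof (cases "l = 0")
  case True
  then show ?thesis
    using assms(2) finite_J by (auto simp: finite_virt_queue card_gt_0_iff)
next
  case False
  then have l_pos: "0 < l" and window: "(T * l) div l = T"
    by simp_all
  obtain j where "j \<in> virt_queue J seq ind h (pos N) T m"
    using assms(2) by blast
  then have jJ: "j \<in> J" and waiting: "pos N j < length (seq j)" "seq j ! pos N j = m"
    and virt_j: "h (seq j) (ind j) + pos N j = T"
    by (simp_all add: mem_virt_queue_iff)
  have window_end: "T * l + l \<le> N"
    using assms(1) by (simp add: add.commute)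
  then have at_start: "pos (T * l) j = pos N j"
    using pos_at_window_start[OF jJ l_pos virt_j] by simp
  moreover have "pos (T * l) j \<le> pos (T * l + l) j" "pos (T * l + l) j \<le> pos N j"
    using window_end by (simp_all add: pos_mono[OF jJ])
  ultimately have unserved: "pos (T * l + l) j = pos (T * l) j"
    by simp
  have "j \<in> Q (T * l) m"
    using jJ waiting virt_j window at_start by (simp add: mem_Q_iff)
  then have Q_overloaded: "l < card (Q (T * l) m)"
    using overloaded_if_unserved[OF l_pos _ unserved] by simp
  have "Q (T * l) m \<subseteq> virt_queue J seq ind h (pos N) T m"
  proof
    fix j' assume j': "j' \<in> Q (T * l) m"
    have "pos N j' = pos (T * l) j'"
      using window_end by (intro pos_stuck_if_overloaded[OF l_pos Q_overloaded j']) simp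
    with j' show "j' \<in> virt_queue J seq ind h (pos N) T m"
      using window by (simp add: mem_Q_iff mem_virt_queue_iff)
  qed
  then have "card (Q (T * l) m) \<le> card (virt_queue J seq ind h (pos N) T m)"
    by (intro card_mono finite_virt_queue finite_J)
  with Q_overloaded show ?thesis
    by simp
qed

end

theorem lemma5p14:
  fixes M :: "'m set" and J :: "'j set" and seq :: "'j \<Rightarrow> 'm list" and ind :: "'j \<Rightarrow> nat"
    and c :: nat and L l :: nat and h :: "'m list \<Rightarrow> nat \<Rightarrow> nat"
    and pos :: "nat \<Rightarrow> 'j \<Rightarrow> nat" and sel :: "nat \<Rightarrow> 'm \<Rightarrow> 'j"
  assumes "finite M" and "finite J"
    and "\<forall>j\<in>J. set (seq j) \<subseteq> M"
    and "\<forall>j\<in>J. ind j \<in> {1..card M ^ c}" and "inj_on ind J"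
    and "\<forall>s i. set s \<subseteq> M \<longrightarrow> i \<in> {1..card M ^ c} \<longrightarrow> h s i < L"
    and "L \<ge> D J seq"
    and "good_hash M L l J seq ind h"
    and "sws_run M J seq ind h l pos sel"
  shows "2 * card {j \<in> J. pos (2 * L * l) j = length (seq j)} \<ge> card J"
proof (rule ccontr)
  interpret sws_execution M J seq ind h l pos sel
    using assms(2,3,9) by unfold_locales
  let ?p = "pos (2 * L * l)"
  assume "\<not> ?thesis"
  then have few_complete: "2 * card {j \<in> J. ?p j = length (seq j)} < card J"
    by simp
  have "Suc T * l \<le> 2 * L * l" if "T < 2 * L" for T
    using that by (intro mult_le_mono1) simp
  then have "\<forall>T<2*L. \<forall>m\<in>M. virt_queue J seq ind h ?p T m \<noteq> {}
      \<longrightarrow> l < card (virt_queue J seq ind h ?p T m)"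
    using virt_queue_overloaded by blast
  moreover have "\<forall>j\<in>J. ?p j < length (seq j) \<longrightarrow> h (seq j) (ind j) + ?p j < 2 * L"
    using assms(3,4,6) order_trans[OF length_le_D[OF assms(2)] assms(7)] by fastforce
  ultimately have "\<not> good_hash M L l J seq ind h"
    using assms(1-3) pos_le_length few_complete
    by (intro not_good_hash_if_virt_queues_overloaded) auto
  with assms(8) show False
    by contradiction
qed

end
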